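(* Fix $\tilde\mu:\mathcal X\times\{0,1\}\to[0,1]$, $\tilde e:\mathcal X\to[\bar e,1-\bar e]$ for some $\bar e>0$, and measurable $\tilde\eta_1,\dots,\tilde\eta_m:\mathcal X\to\mathbb R$, such that $\tilde\mu=\mu$ or $\tilde e=e$. Let $\kappa_\ell=1$ if $\tilde\eta_\ell=\eta_\ell$ and $\kappa_\ell=0$ otherwise. Then, writing $\Lambda=E_P[\phi^\rho_{g_0,\dots,g_m}(X,A,Y;\tilde e,\tilde\mu,\tilde\eta_1,\dots,\tilde\eta_m)]$: (i) if $\kappa_1=\dots=\kappa_m=1$, then $\Lambda=\mathrm{AHE}^\rho_{g_0,\dots,g_m}$; (ii) if $\rho_\ell=+1$ whenever $\kappa_\ell=0$, then $\Lambda\ge\mathrm{AHE}^\rho_{g_0,\dots,g_m}$; (iii) if $\rho_\ell=-1$ whenever $\kappa_\ell=0$, then $\Lambda\le\mathrm{AHE}^\rho_{g_0,\dots,g_m}$.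
   Context: Observed data $(X,A,Y)\sim P$ on $\mathcal X\times\{0,1\}\times\{0,1\}$; $e(x)=P(A=1\mid X=x)\in[\bar e,1-\bar e]$, $\mu(x,a)=E_P[Y\mid X=x,A=a]$. Fix $m\in\mathbb N$, $\rho\in\{-1,+1\}^m$, measurable $g_\ell=(g_\ell^{(0)},g_\ell^{(1)},g_\ell^{(2)}):\mathcal X\to[-1,1]^3$, $\ell=0,\dots,m$; $\eta_\ell(x)=g_\ell^{(0)}(x)\mu(x,0)+g_\ell^{(1)}(x)\mu(x,1)+g_\ell^{(2)}(x)$; $$\mathrm{AHE}^\rho_{g_0,\dots,g_m}=E_P\Big[g_0^{(0)}(X)\mu(X,0)+g_0^{(1)}(X)\mu(X,1)+g_0^{(2)}(X)+\sum_{\ell=1}^m\rho_\ell\min\{0,\eta_\ell(X)\}\Big].$$ For nuisances $\check e,\check\mu,\check\eta_\ell$, with $\check\zeta^{(a)}(X)=g_0^{(a)}(X)+\sum_{\ell=1}^m\rho_\ell\mathbb 1\{\check\eta_\ell(X)\le0\}g_\ell^{(a)}(X)$ ($a=0,1,2$), $$\phi^\rho_{g_0,\dots,g_m}(X,A,Y;\check e,\check\mu,\check\eta_1,\dots,\check\eta_m)=\check\zeta^{(2)}(X)+\check\zeta^{(0)}(X)\frac{(A-\check e(X))\check\mu(X,0)+(1-A)Y}{1-\check e(X)}+\check\zeta^{(1)}(X)\frac{(\check e(X)-A)\check\mu(X,1)+AY}{\check e(X)}.$$ *)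

theory Defs
  imports "HOL-Analysis.Analysis" "HOL-Probability.Probability"
begin

text \<open>Conventions. Observations are triples (x, a, y) with a, y :: bool
(False = 0, True = 1).  g l c x stands for g_l^(c)(x), c = 0,1,2.
mu x False = mu(x,0), mu x True = mu(x,1).  rho l :: real is rho_l.\<close>

definition eta :: "(nat \<Rightarrow> nat \<Rightarrow> 'x \<Rightarrow> real) \<Rightarrow> ('x \<Rightarrow> bool \<Rightarrow> real) \<Rightarrow> nat \<Rightarrow> 'x \<Rightarrow> real" where
  "eta g mu l x = g l 0 x * mu x False + g l 1 x * mu x True + g l 2 x"

definition zeta :: "nat \<Rightarrow> (nat \<Rightarrow> real) \<Rightarrow> (nat \<Rightarrow> nat \<Rightarrow> 'x \<Rightarrow> real)
    \<Rightarrow> (nat \<Rightarrow> 'x \<Rightarrow> real) \<Rightarrow> nat \<Rightarrow> 'x \<Rightarrow> real" where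
  "zeta m rho g etac c x = g 0 c x + (\<Sum>l=1..m. rho l * of_bool (etac l x \<le> 0) * g l c x)"

definition phi :: "nat \<Rightarrow> (nat \<Rightarrow> real) \<Rightarrow> (nat \<Rightarrow> nat \<Rightarrow> 'x \<Rightarrow> real)
    \<Rightarrow> ('x \<Rightarrow> real) \<Rightarrow> ('x \<Rightarrow> bool \<Rightarrow> real) \<Rightarrow> (nat \<Rightarrow> 'x \<Rightarrow> real)
    \<Rightarrow> 'x \<times> bool \<times> bool \<Rightarrow> real" where
  "phi m rho g ec muc etac = (\<lambda>(x, a, y).
     zeta m rho g etac 2 x
     + zeta m rho g etac 0 x * (((of_bool a - ec x) * muc x False + (1 - of_bool a) * of_bool y) / (1 - ec x))
     + zeta m rho g etac 1 x * (((ec x - of_bool a) * muc x True + of_bool a * of_bool y) / ec x))"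

definition AHE :: "('x \<times> bool \<times> bool) measure \<Rightarrow> nat \<Rightarrow> (nat \<Rightarrow> real)
    \<Rightarrow> (nat \<Rightarrow> nat \<Rightarrow> 'x \<Rightarrow> real) \<Rightarrow> ('x \<Rightarrow> bool \<Rightarrow> real) \<Rightarrow> real" where
  "AHE P m rho g mu = (\<integral>(x, a, y). g 0 0 x * mu x False + g 0 1 x * mu x True + g 0 2 x
       + (\<Sum>l=1..m. rho l * min 0 (eta g mu l x)) \<partial>P)"

end

theory Submission imports Defs begin

(* The estimating function splits into the plug-in value zeta_2 + zeta_0 mu(X,0) + zeta_1 mu(X,1)
   and three residual terms.  The outcome residuals 1{A = a} (Y - mu(X,a)), weighted by functions
   of X, have mean zero because mu is the regression of Y on (X, A).  The treatment residual
   A - e~(X) carries a weight proportional to mu~ - mu, so it vanishes if mu~ = mu and has mean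
   zero if e~ = e.  Finally the plug-in value exceeds the AHE integrand by
   sum_l rho_l (1{eta~_l <= 0} eta_l - min 0 eta_l), where each bracket is nonnegative and
   vanishes when eta~_l = eta_l. *)

lemma bounded_mult_comp:
  fixes f g :: "'a \<Rightarrow> 'b::real_normed_algebra"
  assumes "bounded (f ` S)" and "bounded (g ` S)"
  shows "bounded ((\<lambda>x. f x * g x) ` S)"
proof -
  obtain B C where B: "\<forall>x\<in>S. norm (f x) \<le> B" and C: "\<forall>x\<in>S. norm (g x) \<le> C"
    using assms by (auto simp: bounded_iff)
  have "norm (f x * g x) \<le> B * C" if "x \<in> S" for x
    using norm_mult_ineq[of "f x" "g x"] mult_mono[of "norm (f x)" B "norm (g x)" C] B C that
    by (smt (verit, best) norm_ge_zero)
  then show ?thesis by (auto simp: bounded_iff)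
qed

lemma bounded_const_comp: "bounded ((\<lambda>_. c) ` S)"
  by (rule bounded_subset[of "{c}"]) auto

lemma bounded_sum_comp:
  fixes f :: "'i \<Rightarrow> 'a \<Rightarrow> 'b::real_normed_vector"
  assumes "finite I" and "\<And>i. i \<in> I \<Longrightarrow> bounded (f i ` S)"
  shows "bounded ((\<lambda>x. \<Sum>i\<in>I. f i x) ` S)"
  using assms by (induction I rule: finite_induct) (auto intro: bounded_plus_comp bounded_const_comp)

lemma bounded_min_comp:
  fixes f g :: "'a \<Rightarrow> real"
  assumes "bounded (f ` S)" and "bounded (g ` S)"
  shows "bounded ((\<lambda>x. min (f x) (g x)) ` S)"
proof -
  obtain B C where B: "\<forall>x\<in>S. \<bar>f x\<bar> \<le> B" and C: "\<forall>x\<in>S. \<bar>g x\<bar> \<le> C"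
    using assms by (auto simp: bounded_iff)
  then have "\<forall>x\<in>S. \<bar>min (f x) (g x)\<bar> \<le> B + C" by fastforce
  then show ?thesis by (auto simp: bounded_iff)
qed

lemma bounded_of_bool_comp: "bounded ((\<lambda>x. of_bool (Q x) :: real) ` S)"
  by (rule bounded_subset[of "{0, 1}"]) auto

lemma bounded_divide_comp:
  fixes f q :: "'a \<Rightarrow> real"
  assumes "bounded (f ` S)" and "0 < c" and "\<And>x. x \<in> S \<Longrightarrow> c \<le> \<bar>q x\<bar>"
  shows "bounded ((\<lambda>x. f x / q x) ` S)"
proof -
  have "bounded ((\<lambda>x. 1 / q x) ` S)"
    using assms(2,3) by (auto simp: bounded_iff intro!: exI[of _ "1 / c"] frac_le)
  from bounded_mult_comp[OF assms(1) this] show ?thesis by simp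
qed

lemma bounded_image_abs_le: "(\<And>x. x \<in> S \<Longrightarrow> \<bar>f x :: real\<bar> \<le> B) \<Longrightarrow> bounded (f ` S)"
  by (auto simp: bounded_iff)

lemma (in finite_measure) integrable_bounded_image:
  fixes f :: "'a \<Rightarrow> real"
  assumes "f \<in> borel_measurable M" and "bounded (f ` space M)"
  shows "integrable M f"
proof -
  obtain B where "\<forall>x\<in>space M. norm (f x) \<le> B" using assms(2) by (auto simp: bounded_iff)
  then show ?thesis using assms(1) by (intro integrable_const_bound[where B = B] AE_I2) auto
qed

(* Both sides integrate h against the images under X of density M f and density M k,
   and these two measures agree on every set of N. *)
lemma integral_comp_mult_eq_if_indicator_integrals_eq:
  fixes f k :: "'a \<Rightarrow> real" and h :: "'x \<Rightarrow> real"
  assumes X: "X \<in> measurable M N"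
    and f: "integrable M f" "\<And>z. z \<in> space M \<Longrightarrow> 0 \<le> f z"
    and k: "integrable M k" "\<And>z. z \<in> space M \<Longrightarrow> 0 \<le> k z"
    and indicator_eq: "\<And>B. B \<in> sets N \<Longrightarrow>
      (\<integral>z. indicator B (X z) * f z \<partial>M) = (\<integral>z. indicator B (X z) * k z \<partial>M)"
    and h: "h \<in> borel_measurable N"
  shows "(\<integral>z. h (X z) * f z \<partial>M) = (\<integral>z. h (X z) * k z \<partial>M)"
proof -
  have emeasure_distr_density:
    "emeasure (distr (density M q) N X) B = ennreal (\<integral>z. indicator B (X z) * q z \<partial>M)"
    if q: "integrable M q" "\<And>z. z \<in> space M \<Longrightarrow> 0 \<le> q z" and B: "B \<in> sets N" for q B
  proof -
    have "emeasure (distr (density M q) N X) B = emeasure (density M q) (X -` B \<inter> space M)"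
      using X B by (simp add: emeasure_distr)
    also have "\<dots> = (\<integral>\<^sup>+ z. ennreal (q z) * indicator (X -` B \<inter> space M) z \<partial>M)"
      using X B q by (simp add: emeasure_density measurable_sets)
    also have "\<dots> = (\<integral>\<^sup>+ z. ennreal (indicator B (X z) * q z) \<partial>M)"
      by (rule nn_integral_cong) (auto simp: indicator_def)
    also have "\<dots> = ennreal (\<integral>z. indicator B (X z) * q z \<partial>M)"
    proof (rule nn_integral_eq_integral)
      show "integrable M (\<lambda>z. indicator B (X z) * q z)"
        using X B q by (intro Bochner_Integration.integrable_bound[OF q(1)] AE_I2)
          (auto simp: indicator_def)
    qed (use q in \<open>auto intro!: AE_I2\<close>)
    finally show ?thesis .
  qed
  have same_distr: "distr (density M f) N X = distr (density M k) N X"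
    by (rule measure_eqI)
      (simp_all add: emeasure_distr_density[OF f] emeasure_distr_density[OF k] indicator_eq)
  have integral_distr_density: "(\<integral>z. h (X z) * q z \<partial>M) = integral\<^sup>L (distr (density M q) N X) h"
    if q: "integrable M q" "\<And>z. z \<in> space M \<Longrightarrow> 0 \<le> q z" for q
  proof -
    have "integral\<^sup>L (distr (density M q) N X) h = (\<integral>z. h (X z) \<partial>density M q)"
      using X h by (intro integral_distr) simp_all
    also have "\<dots> = (\<integral>z. q z *\<^sub>R h (X z) \<partial>M)"
      using X h q by (intro integral_density) (auto intro!: AE_I2)
    finally show ?thesis by (simp add: mult.commute)
  qed
  show ?thesis
    by (simp add: integral_distr_density[OF f] integral_distr_density[OF k] same_distr)
qed

lemma aipw_decomposition:
  fixes E :: real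
  assumes "E \<noteq> 0" and "E \<noteq> 1"
  shows "z2 + z0 * (((A - E) * m0 + (1 - A) * Y) / (1 - E)) + z1 * (((E - A) * m1 + A * Y) / E)
    = (z2 + z0 * u0 + z1 * u1) + z0 / (1 - E) * ((1 - A) * (Y - u0)) + z1 / E * (A * (Y - u1))
      + (z0 / (1 - E) * (m0 - u0) - z1 / E * (m1 - u1)) * (A - E)"
proof -
  have "1 - E \<noteq> 0" using assms(2) by simp
  then have untreated: "((A - E) * m0 + (1 - A) * Y) / (1 - E)
      = u0 + ((1 - A) * (Y - u0) + (A - E) * (m0 - u0)) / (1 - E)"
    by (simp add: field_simps)
  have treated: "((E - A) * m1 + A * Y) / E = u1 + (A * (Y - u1) + (E - A) * (m1 - u1)) / E"
    using assms(1) by (simp add: field_simps)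
  show ?thesis unfolding untreated treated unfolding divide_inverse by algebra
qed

locale binary_treatment_model = prob_space P
  for P :: "('x \<times> bool \<times> bool) measure" and MX :: "'x measure"
    and e :: "'x \<Rightarrow> real" and mu :: "'x \<Rightarrow> bool \<Rightarrow> real" +
  assumes sets_P: "sets P = sets (MX \<Otimes>\<^sub>M (count_space UNIV \<Otimes>\<^sub>M count_space UNIV))"
    and e_meas: "e \<in> borel_measurable MX"
    and e_bnd: "\<And>x. x \<in> space MX \<Longrightarrow> 0 \<le> e x \<and> e x \<le> 1"
    and e_cond_exp: "\<And>B. B \<in> sets MX \<Longrightarrow>
        (\<integral>(x, a, y). indicator B x * of_bool a \<partial>P) = (\<integral>(x, a, y). indicator B x * e x \<partial>P)"
    and mu_meas: "\<And>a0. (\<lambda>x. mu x a0) \<in> borel_measurable MX"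
    and mu_bnd: "\<And>x a0. x \<in> space MX \<Longrightarrow> 0 \<le> mu x a0 \<and> mu x a0 \<le> 1"
    and mu_cond_exp: "\<And>B a0. B \<in> sets MX \<Longrightarrow>
        (\<integral>(x, a, y). indicator B x * of_bool (a = a0) * of_bool y \<partial>P)
          = (\<integral>(x, a, y). indicator B x * of_bool (a = a0) * mu x a0 \<partial>P)"
begin

lemma measurable_P: "measurable P N = measurable (MX \<Otimes>\<^sub>M (count_space UNIV \<Otimes>\<^sub>M count_space UNIV)) N"
  by (rule measurable_cong_sets[OF sets_P refl])

lemma fst_in_space_MX: "z \<in> space P \<Longrightarrow> fst z \<in> space MX"
  using sets_eq_imp_space_eq[OF sets_P] by (auto simp: space_pair_measure)

lemma measurable_fst_P [measurable]: "fst \<in> measurable P MX"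
  unfolding measurable_P by measurable

lemma measurable_treatment [measurable]: "(\<lambda>z. of_bool (fst (snd z) = a0) :: real) \<in> borel_measurable P"
  unfolding measurable_P by measurable

lemma measurable_outcome [measurable]: "(\<lambda>z. of_bool (snd (snd z)) :: real) \<in> borel_measurable P"
  unfolding measurable_P by measurable

lemma bounded_comp_fst: "bounded (w ` space MX) \<Longrightarrow> bounded ((\<lambda>z. w (fst z)) ` space P)"
  by (rule bounded_subset[of "w ` space MX"]) (auto intro: fst_in_space_MX)

lemma integrable_comp_fst_mult:
  fixes w :: "'x \<Rightarrow> real"
  assumes "w \<in> borel_measurable MX" "bounded (w ` space MX)"
    and "q \<in> borel_measurable P" "bounded (q ` space P)"
  shows "integrable P (\<lambda>z. w (fst z) * q z)"
proof (rule integrable_bounded_image)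
  show "(\<lambda>z. w (fst z) * q z) \<in> borel_measurable P"
    using assms(1,3) by measurable
  show "bounded ((\<lambda>z. w (fst z) * q z) ` space P)"
    using assms(2,4) by (intro bounded_mult_comp bounded_comp_fst)
qed

lemma integrable_comp_fst:
  fixes w :: "'x \<Rightarrow> real"
  assumes "w \<in> borel_measurable MX" "bounded (w ` space MX)"
  shows "integrable P (\<lambda>z. w (fst z))"
  using integrable_comp_fst_mult[OF assms, of "\<lambda>_. 1"] by (simp add: bounded_const_comp)

lemma integral_comp_fst_mult_diff_eq_0:
  fixes w :: "'x \<Rightarrow> real"
  assumes w: "w \<in> borel_measurable MX" "bounded (w ` space MX)"
    and f: "f \<in> borel_measurable P" "\<And>z. z \<in> space P \<Longrightarrow> 0 \<le> f z \<and> f z \<le> 1"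
    and k: "k \<in> borel_measurable P" "\<And>z. z \<in> space P \<Longrightarrow> 0 \<le> k z \<and> k z \<le> 1"
    and indicator_eq: "\<And>B. B \<in> sets MX \<Longrightarrow>
      (\<integral>z. indicator B (fst z) * f z \<partial>P) = (\<integral>z. indicator B (fst z) * k z \<partial>P)"
  shows "(\<integral>z. w (fst z) * (f z - k z) \<partial>P) = 0"
proof -
  have "bounded (f ` space P)" "bounded (k ` space P)"
    using f(2) k(2) by (metis abs_of_nonneg bounded_image_abs_le)+
  then have integrable: "integrable P f" "integrable P k"
    "integrable P (\<lambda>z. w (fst z) * f z)" "integrable P (\<lambda>z. w (fst z) * k z)"
    using w f(1) k(1) integrable_bounded_image integrable_comp_fst_mult by blast+
  have "(\<integral>z. w (fst z) * f z \<partial>P) = (\<integral>z. w (fst z) * k z \<partial>P)"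
  proof (rule integral_comp_mult_eq_if_indicator_integrals_eq[OF measurable_fst_P])
    show "0 \<le> f z" "0 \<le> k z" if "z \<in> space P" for z
      using f(2) k(2) that by blast+
  qed (use integrable indicator_eq w(1) in simp_all)
  then show ?thesis using integrable by (simp add: right_diff_distrib)
qed

lemma integral_treatment_residual:
  fixes w :: "'x \<Rightarrow> real"
  assumes "w \<in> borel_measurable MX" "bounded (w ` space MX)"
  shows "(\<integral>z. w (fst z) * (of_bool (fst (snd z)) - e (fst z)) \<partial>P) = 0"
proof (rule integral_comp_fst_mult_diff_eq_0[OF assms])
  show "(\<lambda>z. of_bool (fst (snd z)) :: real) \<in> borel_measurable P"
    unfolding measurable_P by measurable
  show "(\<lambda>z. e (fst z)) \<in> borel_measurable P"
    using e_meas by measurable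
  show "0 \<le> e (fst z) \<and> e (fst z) \<le> 1" if "z \<in> space P" for z
    using e_bnd fst_in_space_MX that by blast
  show "(\<integral>z. indicator B (fst z) * of_bool (fst (snd z)) \<partial>P) = (\<integral>z. indicator B (fst z) * e (fst z) \<partial>P)"
    if "B \<in> sets MX" for B
    using e_cond_exp[OF that] by (simp add: split_def)
qed (use measurable_treatment[of True] in simp_all)

lemma integral_outcome_residual:
  fixes w :: "'x \<Rightarrow> real"
  assumes "w \<in> borel_measurable MX" "bounded (w ` space MX)"
  shows "(\<integral>z. w (fst z) * (of_bool (fst (snd z) = a0) * (of_bool (snd (snd z)) - mu (fst z) a0)) \<partial>P) = 0"
proof -
  have "(\<integral>z. w (fst z) * (of_bool (fst (snd z) = a0) * of_bool (snd (snd z))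
      - of_bool (fst (snd z) = a0) * mu (fst z) a0) \<partial>P) = 0"
  proof (rule integral_comp_fst_mult_diff_eq_0[OF assms])
    show "(\<lambda>z. of_bool (fst (snd z) = a0) * mu (fst z) a0) \<in> borel_measurable P"
      using mu_meas[of a0] by measurable
    show "0 \<le> of_bool (fst (snd z) = a0) * mu (fst z) a0 \<and> of_bool (fst (snd z) = a0) * mu (fst z) a0 \<le> 1"
      if "z \<in> space P" for z
      using mu_bnd[OF fst_in_space_MX[OF that], of a0] by simp
    show "(\<integral>z. indicator B (fst z) * (of_bool (fst (snd z) = a0) * of_bool (snd (snd z))) \<partial>P)
        = (\<integral>z. indicator B (fst z) * (of_bool (fst (snd z) = a0) * mu (fst z) a0) \<partial>P)"
      if "B \<in> sets MX" for B
      using mu_cond_exp[OF that, of a0] by (simp add: split_def mult.assoc)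
  qed (use measurable_treatment measurable_outcome in \<open>simp_all add: borel_measurable_times\<close>)
  then show ?thesis by (simp add: right_diff_distrib)
qed

lemma integral_aipw_eq_plug_in:
  fixes w :: "nat \<Rightarrow> 'x \<Rightarrow> real" and et :: "'x \<Rightarrow> real" and mut :: "'x \<Rightarrow> bool \<Rightarrow> real"
  assumes w_meas: "\<And>c. c \<le> 2 \<Longrightarrow> w c \<in> borel_measurable MX"
    and w_bnd: "\<And>c. c \<le> 2 \<Longrightarrow> bounded (w c ` space MX)"
    and et_meas: "et \<in> borel_measurable MX"
    and ebar: "0 < ebar" and et_bnd: "\<And>x. x \<in> space MX \<Longrightarrow> ebar \<le> et x \<and> et x \<le> 1 - ebar"
    and mut_meas: "\<And>a0. (\<lambda>x. mut x a0) \<in> borel_measurable MX"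
    and mut_bnd: "\<And>a0. bounded ((\<lambda>x. mut x a0) ` space MX)"
    and doubly_robust: "mut = mu \<or> et = e"
  shows "(\<integral>(x, a, y). w 2 x
            + w 0 x * (((of_bool a - et x) * mut x False + (1 - of_bool a) * of_bool y) / (1 - et x))
            + w 1 x * (((et x - of_bool a) * mut x True + of_bool a * of_bool y) / et x) \<partial>P)
       = (\<integral>z. w 2 (fst z) + w 0 (fst z) * mu (fst z) False + w 1 (fst z) * mu (fst z) True \<partial>P)"
proof -
  define psi where "psi x = w 2 x + w 0 x * mu x False + w 1 x * mu x True" for x
  define h0 where "h0 x = w 0 x / (1 - et x)" for x
  define h1 where "h1 x = w 1 x / et x" for x
  define r where "r x = h0 x * (mut x False - mu x False) - h1 x * (mut x True - mu x True)" for x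
  define outcome_res where "outcome_res a0 z = of_bool (fst (snd z) = a0) * (of_bool (snd (snd z)) - mu (fst z) a0)"
    for a0 and z :: "'x \<times> bool \<times> bool"
  define treatment_res where "treatment_res z = of_bool (fst (snd z)) - et (fst z)"
    for z :: "'x \<times> bool \<times> bool"
  have [measurable]: "w 0 \<in> borel_measurable MX" "w 1 \<in> borel_measurable MX" "w 2 \<in> borel_measurable MX"
    "et \<in> borel_measurable MX" "(\<lambda>x. mu x a0) \<in> borel_measurable MX" "(\<lambda>x. mut x a0) \<in> borel_measurable MX"
    for a0 using w_meas et_meas mu_meas mut_meas by simp_all
  have meas: "psi \<in> borel_measurable MX" "h0 \<in> borel_measurable MX" "h1 \<in> borel_measurable MX"
    "r \<in> borel_measurable MX" "outcome_res a0 \<in> borel_measurable P" "treatment_res \<in> borel_measurable P" for a0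
    unfolding psi_def h0_def h1_def r_def outcome_res_def treatment_res_def measurable_P by measurable
  have et_away: "ebar \<le> \<bar>et x\<bar>" "ebar \<le> \<bar>1 - et x\<bar>" if "x \<in> space MX" for x
    using et_bnd[OF that] by auto
  have mu_bounded: "bounded ((\<lambda>x. mu x a0) ` space MX)" for a0
    using mu_bnd by (intro bounded_image_abs_le[where B = 1]) (simp add: abs_le_iff)
  have et_bounded: "bounded (et ` space MX)"
    using et_bnd ebar by (intro bounded_image_abs_le[where B = 1]) (fastforce simp: abs_le_iff)
  have bnd_h: "bounded (h0 ` space MX)" "bounded (h1 ` space MX)"
    unfolding h0_def h1_def using w_bnd et_away ebar by (auto intro: bounded_divide_comp)
  have bnd: "bounded (psi ` space MX)" "bounded (r ` space MX)"
    "bounded (outcome_res a0 ` space P)" "bounded (treatment_res ` space P)" for a0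
    unfolding psi_def r_def outcome_res_def treatment_res_def
    using bnd_h w_bnd mu_bounded mut_bnd et_bounded
    by (auto intro!: bounded_plus_comp bounded_minus_comp bounded_mult_comp bounded_of_bool_comp
        bounded_comp_fst[where w = "\<lambda>x. mu x a0"] bounded_comp_fst[where w = et])
  have integrand_eq: "(case z of (x, a, y) \<Rightarrow> w 2 x
            + w 0 x * (((of_bool a - et x) * mut x False + (1 - of_bool a) * of_bool y) / (1 - et x))
            + w 1 x * (((et x - of_bool a) * mut x True + of_bool a * of_bool y) / et x))
      = psi (fst z) + h0 (fst z) * outcome_res False z + h1 (fst z) * outcome_res True z
        + r (fst z) * treatment_res z" if "z \<in> space P" for z
  proof -
    obtain x a y where z: "z = (x, a, y)" by (cases z)
    have et_x: "et x \<noteq> 0" "et x \<noteq> 1" using et_bnd[OF fst_in_space_MX[OF that]] ebar z by auto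
    have residuals: "outcome_res False z = (1 - of_bool a) * (of_bool y - mu x False)"
      "outcome_res True z = of_bool a * (of_bool y - mu x True)" "treatment_res z = of_bool a - et x"
      unfolding z outcome_res_def treatment_res_def by (cases a; simp)+
    show ?thesis
      unfolding residuals unfolding z psi_def h0_def h1_def r_def fst_conv prod.case
      by (rule aipw_decomposition[OF et_x])
  qed
  have treatment_term: "(\<integral>z. r (fst z) * treatment_res z \<partial>P) = 0"
    using doubly_robust
  proof
    assume "mut = mu"
    then show ?thesis by (simp add: r_def)
  next
    assume "et = e"
    then show ?thesis
      unfolding treatment_res_def using integral_treatment_residual meas(4) bnd(2) by simp
  qed
  have outcome_terms: "(\<integral>z. h0 (fst z) * outcome_res False z \<partial>P) = 0"
    "(\<integral>z. h1 (fst z) * outcome_res True z \<partial>P) = 0"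
    unfolding outcome_res_def using meas(2,3) bnd_h by (simp_all only: integral_outcome_residual)
  have integrable: "integrable P (\<lambda>z. psi (fst z))"
    "integrable P (\<lambda>z. h0 (fst z) * outcome_res a0 z)" "integrable P (\<lambda>z. h1 (fst z) * outcome_res a0 z)"
    "integrable P (\<lambda>z. r (fst z) * treatment_res z)" for a0
    using meas bnd bnd_h by (simp_all add: integrable_comp_fst integrable_comp_fst_mult)
  have "(\<integral>(x, a, y). w 2 x
            + w 0 x * (((of_bool a - et x) * mut x False + (1 - of_bool a) * of_bool y) / (1 - et x))
            + w 1 x * (((et x - of_bool a) * mut x True + of_bool a * of_bool y) / et x) \<partial>P)
      = (\<integral>z. psi (fst z) + h0 (fst z) * outcome_res False z + h1 (fst z) * outcome_res True z
          + r (fst z) * treatment_res z \<partial>P)"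
    by (rule Bochner_Integration.integral_cong[OF refl integrand_eq])
  also have "\<dots> = (\<integral>z. psi (fst z) \<partial>P)"
    using integrable treatment_term outcome_terms by simp
  finally show ?thesis unfolding psi_def .
qed

end

lemma zeta_measurable:
  assumes "\<And>l. l \<le> m \<Longrightarrow> g l c \<in> borel_measurable M"
    and "\<And>l. l \<in> {1..m} \<Longrightarrow> etat l \<in> borel_measurable M"
  shows "zeta m rho g etat c \<in> borel_measurable M"
proof -
  have "(\<lambda>x. rho l * of_bool (etat l x \<le> 0) * g l c x) \<in> borel_measurable M" if "l \<in> {1..m}" for l
  proof -
    have [measurable]: "etat l \<in> borel_measurable M" "g l c \<in> borel_measurable M"
      using assms that by auto
    show ?thesis by measurable
  qed
  then show ?thesis
    unfolding zeta_def using assms(1)[of 0] by (intro borel_measurable_add borel_measurable_sum) auto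
qed

lemma bounded_zeta:
  assumes "\<And>l. l \<le> m \<Longrightarrow> bounded (g l c ` S)"
  shows "bounded (zeta m rho g etat c ` S)"
  unfolding zeta_def using assms
  by (intro bounded_plus_comp bounded_sum_comp bounded_mult_comp bounded_const_comp bounded_of_bool_comp) auto

lemma zeta_plug_in_eq:
  "zeta m rho g etat 2 x + zeta m rho g etat 0 x * mu x False + zeta m rho g etat 1 x * mu x True
    = g 0 0 x * mu x False + g 0 1 x * mu x True + g 0 2 x
      + (\<Sum>l=1..m. rho l * (of_bool (etat l x \<le> 0) * eta g mu l x))"
  by (simp add: zeta_def eta_def sum.distrib sum_distrib_left sum_distrib_right algebra_simps)

context binary_treatment_model
begin

lemma integral_phi_eq_AHE_plus_bias:
  fixes et :: "'x \<Rightarrow> real" and mut :: "'x \<Rightarrow> bool \<Rightarrow> real" and etat :: "nat \<Rightarrow> 'x \<Rightarrow> real"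
  assumes g_meas: "\<And>l c. l \<le> m \<Longrightarrow> c \<le> 2 \<Longrightarrow> g l c \<in> borel_measurable MX"
    and g_bnd: "\<And>l c x. l \<le> m \<Longrightarrow> c \<le> 2 \<Longrightarrow> x \<in> space MX \<Longrightarrow> \<bar>g l c x\<bar> \<le> 1"
    and etat_meas: "\<And>l. l \<in> {1..m} \<Longrightarrow> etat l \<in> borel_measurable MX"
    and et_meas: "et \<in> borel_measurable MX"
    and ebar: "0 < ebar" and et_bnd: "\<And>x. x \<in> space MX \<Longrightarrow> ebar \<le> et x \<and> et x \<le> 1 - ebar"
    and mut_meas: "\<And>a0. (\<lambda>x. mut x a0) \<in> borel_measurable MX"
    and mut_bnd: "\<And>x a0. x \<in> space MX \<Longrightarrow> 0 \<le> mut x a0 \<and> mut x a0 \<le> 1"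
    and doubly_robust: "mut = mu \<or> et = e"
  shows "(\<integral>z. phi m rho g et mut etat z \<partial>P) = AHE P m rho g mu
     + (\<integral>(x, a, y). (\<Sum>l=1..m. rho l * (of_bool (etat l x \<le> 0) * eta g mu l x - min 0 (eta g mu l x))) \<partial>P)"
proof -
  define plug_in where "plug_in x = zeta m rho g etat 2 x + zeta m rho g etat 0 x * mu x False
    + zeta m rho g etat 1 x * mu x True" for x
  define ahe where "ahe x = g 0 0 x * mu x False + g 0 1 x * mu x True + g 0 2 x
    + (\<Sum>l=1..m. rho l * min 0 (eta g mu l x))" for x
  have g_bounded: "bounded (g l c ` space MX)" if "l \<le> m" "c \<le> 2" for l c
    using g_bnd[OF that] by (rule bounded_image_abs_le)
  have mu_bounded: "bounded ((\<lambda>x. mu x a0) ` space MX)" for a0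
    using mu_bnd by (intro bounded_image_abs_le[where B = 1]) (simp add: abs_le_iff)
  have mut_bounded: "bounded ((\<lambda>x. mut x a0) ` space MX)" for a0
    using mut_bnd by (intro bounded_image_abs_le[where B = 1]) (simp add: abs_le_iff)
  have zeta_meas: "zeta m rho g etat c \<in> borel_measurable MX" if "c \<le> 2" for c
    using g_meas that etat_meas by (intro zeta_measurable) auto
  have zeta_bounded: "bounded (zeta m rho g etat c ` space MX)" if "c \<le> 2" for c
    using g_bounded that by (intro bounded_zeta) auto
  have eta_meas: "eta g mu l \<in> borel_measurable MX" if "l \<le> m" for l
    unfolding eta_def using g_meas that mu_meas by (intro borel_measurable_add borel_measurable_times) auto
  have eta_bounded: "bounded (eta g mu l ` space MX)" if "l \<le> m" for l
    unfolding eta_def using g_bounded that mu_bounded by (intro bounded_plus_comp bounded_mult_comp) auto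
  have integrable: "integrable P (\<lambda>z. plug_in (fst z))" "integrable P (\<lambda>z. ahe (fst z))"
  proof (rule_tac [!] integrable_comp_fst)
    show "plug_in \<in> borel_measurable MX" "bounded (plug_in ` space MX)"
      unfolding plug_in_def using zeta_meas zeta_bounded mu_meas mu_bounded
      by (auto intro!: borel_measurable_add borel_measurable_times bounded_plus_comp bounded_mult_comp)
    show "ahe \<in> borel_measurable MX" "bounded (ahe ` space MX)"
      unfolding ahe_def using g_meas g_bounded eta_meas eta_bounded mu_meas mu_bounded
      by (auto intro!: borel_measurable_add borel_measurable_times borel_measurable_sum borel_measurable_min
          bounded_plus_comp bounded_mult_comp bounded_sum_comp bounded_min_comp bounded_const_comp)
  qed
  have "(\<integral>z. phi m rho g et mut etat z \<partial>P) = (\<integral>z. plug_in (fst z) \<partial>P)"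
    unfolding phi_def plug_in_def
    using zeta_meas zeta_bounded et_meas ebar et_bnd mut_meas mut_bounded doubly_robust
    by (rule integral_aipw_eq_plug_in[where w = "zeta m rho g etat"])
  also have "\<dots> = (\<integral>z. ahe (fst z) \<partial>P) + (\<integral>z. plug_in (fst z) - ahe (fst z) \<partial>P)"
    using integrable by simp
  also have "(\<integral>z. ahe (fst z) \<partial>P) = AHE P m rho g mu"
    unfolding AHE_def ahe_def by (simp add: split_def)
  also have "(\<lambda>z. plug_in (fst z) - ahe (fst z)) = (\<lambda>(x, a, y). \<Sum>l=1..m.
      rho l * (of_bool (etat l x \<le> 0) * eta g mu l x - min 0 (eta g mu l x)))"
    unfolding plug_in_def ahe_def zeta_plug_in_eq
    by (simp add: split_def right_diff_distrib sum_subtractf)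
  finally show ?thesis .
qed

end

theorem lemma5:
  fixes P :: "('x \<times> bool \<times> bool) measure"
    and MX :: "'x measure"
    and e :: "'x \<Rightarrow> real" and mu :: "'x \<Rightarrow> bool \<Rightarrow> real"
    and ebar :: real and m :: nat and rho :: "nat \<Rightarrow> real"
    and g :: "nat \<Rightarrow> nat \<Rightarrow> 'x \<Rightarrow> real"
    and et :: "'x \<Rightarrow> real" and mut :: "'x \<Rightarrow> bool \<Rightarrow> real"
    and etat :: "nat \<Rightarrow> 'x \<Rightarrow> real"
  assumes P: "prob_space P"
    and sets_P: "sets P = sets (MX \<Otimes>\<^sub>M (count_space UNIV \<Otimes>\<^sub>M count_space UNIV))"
    and ebar: "0 < ebar"
    (* e(x) = P(A = 1 | X = x) *)
    and e_meas: "e \<in> borel_measurable MX"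
    and e_bnd: "\<And>x. x \<in> space MX \<Longrightarrow> ebar \<le> e x \<and> e x \<le> 1 - ebar"
    and e_ce: "\<And>B. B \<in> sets MX \<Longrightarrow>
        (\<integral>(x, a, y). indicator B x * of_bool a \<partial>P) = (\<integral>(x, a, y). indicator B x * e x \<partial>P)"
    (* mu(x,a) = E[Y | X = x, A = a] *)
    and mu_meas: "\<And>a0. (\<lambda>x. mu x a0) \<in> borel_measurable MX"
    and mu_bnd: "\<And>x a0. x \<in> space MX \<Longrightarrow> 0 \<le> mu x a0 \<and> mu x a0 \<le> 1"
    and mu_ce: "\<And>B a0. B \<in> sets MX \<Longrightarrow>
        (\<integral>(x, a, y). indicator B x * of_bool (a = a0) * of_bool y \<partial>P)
          = (\<integral>(x, a, y). indicator B x * of_bool (a = a0) * mu x a0 \<partial>P)"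
    (* rho \<in> {-1,+1}^m, g_l measurable into [-1,1]^3 *)
    and rho: "\<And>l. l \<in> {1..m} \<Longrightarrow> rho l = 1 \<or> rho l = -1"
    and g_meas: "\<And>l c. l \<le> m \<Longrightarrow> c \<le> 2 \<Longrightarrow> g l c \<in> borel_measurable MX"
    and g_bnd: "\<And>l c x. l \<le> m \<Longrightarrow> c \<le> 2 \<Longrightarrow> x \<in> space MX \<Longrightarrow> \<bar>g l c x\<bar> \<le> 1"
    (* nuisance estimates *)
    and mut_meas: "\<And>a0. (\<lambda>x. mut x a0) \<in> borel_measurable MX"
    and mut_bnd: "\<And>x a0. x \<in> space MX \<Longrightarrow> 0 \<le> mut x a0 \<and> mut x a0 \<le> 1"
    and et_meas: "et \<in> borel_measurable MX"
    and et_bnd: "\<And>x. x \<in> space MX \<Longrightarrow> ebar \<le> et x \<and> et x \<le> 1 - ebar"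
    and etat_meas: "\<And>l. l \<in> {1..m} \<Longrightarrow> etat l \<in> borel_measurable MX"
    and dr: "mut = mu \<or> et = e"
  shows "((\<forall>l\<in>{1..m}. etat l = eta g mu l) \<longrightarrow>
            (\<integral>z. phi m rho g et mut etat z \<partial>P) = AHE P m rho g mu)
       \<and> ((\<forall>l\<in>{1..m}. etat l \<noteq> eta g mu l \<longrightarrow> rho l = 1) \<longrightarrow>
            (\<integral>z. phi m rho g et mut etat z \<partial>P) \<ge> AHE P m rho g mu)
       \<and> ((\<forall>l\<in>{1..m}. etat l \<noteq> eta g mu l \<longrightarrow> rho l = -1) \<longrightarrow>
            (\<integral>z. phi m rho g et mut etat z \<partial>P) \<le> AHE P m rho g mu)"
proof -
  have e_unit: "0 \<le> e x \<and> e x \<le> 1" if "x \<in> space MX" for x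
    using e_bnd[OF that] ebar by linarith
  interpret binary_treatment_model P MX e mu
    by (intro binary_treatment_model.intro binary_treatment_model_axioms.intro
        P sets_P e_meas e_unit e_ce mu_meas mu_bnd mu_ce)
  define bias where "bias l x = rho l * (of_bool (etat l x \<le> 0) * eta g mu l x - min 0 (eta g mu l x))"
    for l x
  have phi: "(\<integral>z. phi m rho g et mut etat z \<partial>P) = AHE P m rho g mu + (\<integral>(x, a, y). (\<Sum>l=1..m. bias l x) \<partial>P)"
    unfolding bias_def
    using g_meas g_bnd etat_meas et_meas ebar et_bnd mut_meas mut_bnd dr
    by (rule integral_phi_eq_AHE_plus_bias)
  have bracket_nonneg: "0 \<le> of_bool (etat l x \<le> 0) * eta g mu l x - min 0 (eta g mu l x)" for l x
    by simp
  have bias_vanishes: "bias l x = 0" if "etat l = eta g mu l" for l x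
    using that by (simp add: bias_def)
  show ?thesis
    unfolding phi
  proof (intro conjI impI)
    assume "\<forall>l\<in>{1..m}. etat l = eta g mu l"
    then show "AHE P m rho g mu + (\<integral>(x, a, y). (\<Sum>l=1..m. bias l x) \<partial>P) = AHE P m rho g mu"
      by (simp add: bias_vanishes split_def)
  next
    assume "\<forall>l\<in>{1..m}. etat l \<noteq> eta g mu l \<longrightarrow> rho l = 1"
    then have "0 \<le> bias l x" if "l \<in> {1..m}" for l x
      using that bracket_nonneg bias_vanishes by (cases "etat l = eta g mu l") (simp_all add: bias_def)
    then have "0 \<le> (\<integral>z. (\<Sum>l=1..m. bias l (fst z)) \<partial>P)"
      by (intro Bochner_Integration.integral_nonneg) (auto intro!: sum_nonneg)
    then show "AHE P m rho g mu + (\<integral>(x, a, y). (\<Sum>l=1..m. bias l x) \<partial>P) \<ge> AHE P m rho g mu"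
      by (simp add: split_def)
  next
    assume "\<forall>l\<in>{1..m}. etat l \<noteq> eta g mu l \<longrightarrow> rho l = -1"
    then have "bias l x \<le> 0" if "l \<in> {1..m}" for l x
      using that bracket_nonneg bias_vanishes by (cases "etat l = eta g mu l") (simp_all add: bias_def)
    then have "0 \<le> (\<integral>z. - (\<Sum>l=1..m. bias l (fst z)) \<partial>P)"
      by (intro Bochner_Integration.integral_nonneg) (auto intro!: sum_nonpos)
    then show "AHE P m rho g mu + (\<integral>(x, a, y). (\<Sum>l=1..m. bias l x) \<partial>P) \<le> AHE P m rho g mu"
      by (simp add: split_def)
  qed
qed

end
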